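(* Let $n\in\mathbb{N}$ with $n\ge 2$ and define $$\alpha:=\frac{n+\sqrt{n^2+4}}{2},\qquad \gamma:=\frac1\alpha,\qquad \tau:=\frac{\log\alpha}{\log n}.$$ Then $\alpha\in D_{\gamma,\tau}$ and $\alpha$ is an isolated point of $D_{\gamma,\tau}$ (i.e. there is an open interval containing $\alpha$ whose intersection with $D_{\gamma,\tau}$ is $\{\alpha\}$).
   Context: For $\gamma>0$ and $\tau\ge 1$, the Diophantine set $D_{\gamma,\tau}$ is the set of all real numbers $\xi$ such that $|\xi q-p|\ge \gamma/q^{\tau}$ for all $p\in\mathbb{Z}$ and all $q\in\mathbb{N}=\{1,2,3,\dots\}$. *)

theory Defs
  imports "HOL-Analysis.Analysis"
begin

definition diophantine_set :: "real \<Rightarrow> real \<Rightarrow> real set" where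
  "diophantine_set \<gamma> \<tau> =
     {\<xi>. \<forall>p::int. \<forall>q::nat. q \<ge> 1 \<longrightarrow> \<bar>\<xi> * real q - real_of_int p\<bar> \<ge> \<gamma> / (real q powr \<tau>)}"

end

theory Submission
  imports Defs
begin

text \<open>
  The number \<alpha> is the positive root of \<open>x\<^sup>2 = n x + 1\<close>, so \<open>\<alpha> = n + 1/\<alpha>\<close>. Writing
  \<open>p = n q + m\<close>, this gives \<open>\<bar>\<alpha> q - p\<bar> = \<bar>\<alpha> m - q\<bar> / \<alpha>\<close>: one step of the continued
  fraction \<open>[n; n, n, \<dots>]\<close> of \<alpha>. Unless \<open>1 \<le> m \<le> q / n\<close> the left-hand side is at least
  \<open>1/\<alpha>\<close> outright; otherwise the pair \<open>(q, m)\<close> is smaller and \<open>q\<^sup>\<tau> \<ge> (n m)\<^sup>\<tau> = \<alpha> m\<^sup>\<tau>\<close>, so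
  \<open>\<bar>\<alpha> q - p\<bar> \<ge> 1/(\<alpha> q\<^sup>\<tau>)\<close> follows by induction on \<open>q\<close>. The bound is sharp at the two
  convergents \<open>n/1\<close> and \<open>(n\<^sup>2 + 1)/n\<close>: the first forbids points of the Diophantine set in
  \<open>(n, \<alpha>)\<close>, the second those slightly to the right of \<alpha>.
\<close>

lemma diophantine_setD:
  "\<xi> \<in> diophantine_set \<gamma> \<tau> \<Longrightarrow> q \<ge> 1 \<Longrightarrow> \<gamma> / real q powr \<tau> \<le> \<bar>\<xi> * real q - real_of_int p\<bar>"
  unfolding diophantine_set_def by blast

locale metallic_mean =
  fixes n :: nat and \<alpha> \<tau> :: real
  assumes n_ge_2: "n \<ge> 2"
    and quadratic: "\<alpha> * \<alpha> = real n * \<alpha> + 1"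
    and n_less_\<alpha>: "real n < \<alpha>"
    and n_powr_\<tau>: "real n powr \<tau> = \<alpha>"
begin

lemma \<alpha>_pos: "\<alpha> > 0"
  using n_less_\<alpha> by linarith

lemma \<alpha>_minus_n: "\<alpha> - real n = 1 / \<alpha>"
  using quadratic \<alpha>_pos by (simp add: field_simps)

lemma \<tau>_nonneg: "\<tau> \<ge> 0"
proof -
  have "real n powr 0 < real n powr \<tau>"
    using n_ge_2 n_less_\<alpha> n_powr_\<tau> by simp
  then show ?thesis
    using n_ge_2 powr_less_cancel_iff[of "real n" 0 \<tau>] by simp
qed

lemma abs_dist_shift: "\<bar>\<alpha> * q - (real n * q + m)\<bar> = \<bar>\<alpha> * m - q\<bar> / \<alpha>"
proof -
  have "\<alpha> * (\<alpha> * q - (real n * q + m)) = (\<alpha> * \<alpha> - real n * \<alpha>) * q - \<alpha> * m"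
    by (simp add: algebra_simps)
  also have "\<dots> = - (\<alpha> * m - q)"
    using quadratic by simp
  finally have "\<alpha> * \<bar>\<alpha> * q - (real n * q + m)\<bar> = \<bar>\<alpha> * m - q\<bar>"
    using \<alpha>_pos by (metis abs_minus_cancel abs_mult abs_of_pos)
  then show ?thesis
    using \<alpha>_pos by (simp add: field_simps)
qed

lemma dist_ge_inverse_if_below:
  assumes "real_of_int p \<le> real n * q" and "q \<ge> 1"
  shows "\<bar>\<alpha> * q - p\<bar> \<ge> 1 / \<alpha>"
proof -
  have "\<alpha> * q - p \<ge> (\<alpha> - real n) * q"
    using assms(1) by (simp add: algebra_simps)
  moreover have "(\<alpha> - real n) * q \<ge> \<alpha> - real n"
    using assms(2) n_less_\<alpha> by simp
  ultimately show ?thesis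
    using \<alpha>_minus_n by linarith
qed

lemma dist_ge_inverse_if_above:
  assumes "real n * (p - real n * q) \<ge> q + 1" and "q \<ge> 0"
  shows "\<bar>\<alpha> * q - p\<bar> \<ge> 1 / \<alpha>"
proof -
  have "p - real n * q \<ge> (q + 1) / real n"
    using assms(1) n_ge_2 by (simp add: field_simps)
  moreover have "(q + 1) / real n \<ge> (q + 1) / \<alpha>"
    using assms(2) n_ge_2 n_less_\<alpha> by (intro divide_left_mono) auto
  ultimately have "p - \<alpha> * q \<ge> (q + 1) / \<alpha> - q * (\<alpha> - real n)"
    by (simp add: algebra_simps)
  also have "(q + 1) / \<alpha> - q * (\<alpha> - real n) = 1 / \<alpha>"
    using \<alpha>_pos by (simp add: \<alpha>_minus_n field_simps)
  finally show ?thesis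
    by linarith
qed

lemma powr_\<tau>_scale:
  assumes "real n * m \<le> q" and "m \<ge> 0"
  shows "\<alpha> * m powr \<tau> \<le> q powr \<tau>"
proof -
  have "\<alpha> * m powr \<tau> = (real n * m) powr \<tau>"
    using assms(2) by (simp add: powr_mult n_powr_\<tau>)
  also have "\<dots> \<le> q powr \<tau>"
    using assms \<tau>_nonneg by (intro powr_mono2) auto
  finally show ?thesis .
qed

lemma diophantine_bound:
  "q \<ge> 1 \<Longrightarrow> \<bar>\<alpha> * real q - real_of_int p\<bar> \<ge> 1 / (\<alpha> * real q powr \<tau>)"
proof (induction q arbitrary: p rule: less_induct)
  case (less q)
  have le_inverse: "1 / (\<alpha> * real q powr \<tau>) \<le> 1 / \<alpha>"
    using less.prems \<tau>_nonneg \<alpha>_pos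
    by (simp add: divide_simps ge_one_powr_ge_zero mult_le_cancel_left1)
  define m where "m = p - int n * int q"
  consider (below) "m \<le> 0" | (above) "int n * m \<ge> int q + 1" | (shift) "1 \<le> m" "int n * m \<le> int q"
    by linarith
  then show ?case
  proof cases
    case below
    then have "p \<le> int n * int q"
      unfolding m_def by simp
    then have "real_of_int p \<le> real_of_int (int n * int q)"
      by (simp only: of_int_le_iff)
    then have "1 / \<alpha> \<le> \<bar>\<alpha> * real q - real_of_int p\<bar>"
      using dist_ge_inverse_if_below less.prems by simp
    then show ?thesis
      using le_inverse by linarith
  next
    case above
    then have "real_of_int (int q + 1) \<le> real_of_int (int n * m)"
      by (simp only: of_int_le_iff)
    then have "real n * (real_of_int p - real n * real q) \<ge> real q + 1"
      unfolding m_def by (simp add: algebra_simps)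
    then have "1 / \<alpha> \<le> \<bar>\<alpha> * real q - real_of_int p\<bar>"
      using dist_ge_inverse_if_above by simp
    then show ?thesis
      using le_inverse by linarith
  next
    case shift
    define k where "k = nat m"
    have k: "m = int k" "k \<ge> 1"
      using shift(1) unfolding k_def by simp_all
    have nk_nat: "n * k \<le> q"
      using shift(2) k(1) by (simp flip: of_nat_mult)
    then have nk: "real n * real k \<le> real q"
      by (simp flip: of_nat_mult)
    have "2 * k \<le> n * k"
      using n_ge_2 by simp
    then have "k < q"
      using nk_nat k(2) by linarith
    then have IH: "\<bar>\<alpha> * real k - real q\<bar> \<ge> 1 / (\<alpha> * real k powr \<tau>)"
      using less.IH[of k "int q"] k(2) by simp
    have "p = int n * int q + int k"
      using k(1) m_def by simp
    then have p_eq: "real_of_int p = real n * real q + real k"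
      by simp
    have "1 / (\<alpha> * real q powr \<tau>) \<le> 1 / (\<alpha> * (\<alpha> * real k powr \<tau>))"
      using powr_\<tau>_scale[OF nk] \<alpha>_pos k(2) less.prems
      by (intro divide_left_mono mult_left_mono mult_pos_pos) auto
    also have "\<dots> = 1 / (\<alpha> * real k powr \<tau>) / \<alpha>"
      by simp
    also have "\<dots> \<le> \<bar>\<alpha> * real k - real q\<bar> / \<alpha>"
      using IH \<alpha>_pos by (intro divide_right_mono) auto
    also have "\<dots> = \<bar>\<alpha> * real q - real_of_int p\<bar>"
      using abs_dist_shift[of q k] p_eq by simp
    finally show ?thesis .
  qed
qed

lemma mem_diophantine_set: "\<alpha> \<in> diophantine_set (1 / \<alpha>) \<tau>"
  unfolding diophantine_set_def using diophantine_bound by simp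

lemma diophantine_set_above_n_ge:
  assumes "\<xi> \<in> diophantine_set (1 / \<alpha>) \<tau>" and "real n < \<xi>"
  shows "\<alpha> \<le> \<xi>"
proof -
  have "1 / \<alpha> \<le> \<bar>\<xi> - real n\<bar>"
    using diophantine_setD[OF assms(1), of 1 "int n"] by simp
  then show ?thesis
    using assms(2) \<alpha>_minus_n by simp
qed

text \<open>At the convergent \<open>(n\<^sup>2 + 1)/n\<close> the bound \<open>\<gamma> / n\<^sup>\<tau> = 1/\<alpha>\<^sup>2\<close> is attained exactly,
  so it fails for every \<xi> slightly to the right of \<alpha>.\<close>
lemma convergent_error: "real n * \<alpha> - (real n ^ 2 + 1) = - 1 / (\<alpha> * \<alpha>)"
proof -
  have "\<alpha> * (real n * \<alpha> - (real n ^ 2 + 1)) = real n * (\<alpha> * \<alpha> - real n * \<alpha>) - \<alpha>"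
    by (simp add: algebra_simps power2_eq_square)
  also have "\<dots> = - 1 / \<alpha>"
    using quadratic \<alpha>_minus_n by simp
  finally show ?thesis
    using \<alpha>_pos by (simp add: field_simps)
qed

lemma diophantine_set_near_right_eq:
  assumes "\<xi> \<in> diophantine_set (1 / \<alpha>) \<tau>" and "\<alpha> \<le> \<xi>" and "\<xi> < \<alpha> + 1 / (real n * \<alpha> * \<alpha>)"
  shows "\<xi> = \<alpha>"
proof -
  have "1 / \<alpha> / real n powr \<tau> \<le> \<bar>\<xi> * real n - real_of_int (int n * int n + 1)\<bar>"
    using diophantine_setD[OF assms(1), of n "int n * int n + 1"] n_ge_2 by simp
  also have "\<xi> * real n - real_of_int (int n * int n + 1) = real n * (\<xi> - \<alpha>) - 1 / (\<alpha> * \<alpha>)"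
    using convergent_error by (simp add: algebra_simps power2_eq_square)
  finally have bound: "1 / (\<alpha> * \<alpha>) \<le> \<bar>real n * (\<xi> - \<alpha>) - 1 / (\<alpha> * \<alpha>)\<bar>"
    by (simp add: n_powr_\<tau>)
  have "real n * (\<xi> - \<alpha>) < 1 / (\<alpha> * \<alpha>)"
    using assms(3) n_ge_2 \<alpha>_pos by (simp add: field_simps)
  moreover have "0 \<le> real n * (\<xi> - \<alpha>)"
    using assms(2) by simp
  ultimately have "real n * (\<xi> - \<alpha>) \<le> 0"
    using bound by (simp add: abs_if split: if_splits)
  then show ?thesis
    using assms(2) n_ge_2 by (simp add: mult_le_0_iff)
qed

lemma isolated_in_diophantine_set:
  "{real n<..<\<alpha> + 1 / (real n * \<alpha> * \<alpha>)} \<inter> diophantine_set (1 / \<alpha>) \<tau> = {\<alpha>}"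
proof (intro equalityI subsetI)
  fix \<xi> assume "\<xi> \<in> {real n<..<\<alpha> + 1 / (real n * \<alpha> * \<alpha>)} \<inter> diophantine_set (1 / \<alpha>) \<tau>"
  then have "real n < \<xi>" "\<xi> < \<alpha> + 1 / (real n * \<alpha> * \<alpha>)" "\<xi> \<in> diophantine_set (1 / \<alpha>) \<tau>"
    by simp_all
  then show "\<xi> \<in> {\<alpha>}"
    using diophantine_set_above_n_ge diophantine_set_near_right_eq by blast
next
  fix \<xi> assume "\<xi> \<in> {\<alpha>}"
  moreover have "\<alpha> < \<alpha> + 1 / (real n * \<alpha> * \<alpha>)"
    using \<alpha>_pos n_ge_2 by simp
  ultimately show "\<xi> \<in> {real n<..<\<alpha> + 1 / (real n * \<alpha> * \<alpha>)} \<inter> diophantine_set (1 / \<alpha>) \<tau>"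
    using n_less_\<alpha> mem_diophantine_set by simp
qed

end

lemma metallic_mean_sqrt:
  assumes "n \<ge> 2" and "\<alpha> = (real n + sqrt (real n ^ 2 + 4)) / 2"
  shows "metallic_mean n \<alpha> (ln \<alpha> / ln (real n))"
proof -
  have "real n < sqrt (real n ^ 2 + 4)"
    by (intro real_less_rsqrt) simp
  then have gt: "real n < \<alpha>"
    using assms(2) by simp
  have "\<alpha> * \<alpha> = real n * \<alpha> + 1"
    unfolding assms(2) by (simp add: power2_eq_square algebra_simps)
  moreover have "real n powr (ln \<alpha> / ln (real n)) = \<alpha>"
    using assms(1) gt by (simp add: powr_def)
  ultimately show ?thesis
    using assms(1) gt by unfold_locales auto
qed

theorem theorem1:
  fixes n :: nat and \<alpha> \<gamma> \<tau> :: real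
  assumes "n \<ge> 2"
    and "\<alpha> = (real n + sqrt (real n ^ 2 + 4)) / 2"
    and "\<gamma> = 1 / \<alpha>"
    and "\<tau> = ln \<alpha> / ln (real n)"
  shows "\<alpha> \<in> diophantine_set \<gamma> \<tau> \<and>
         (\<exists>a b. a < \<alpha> \<and> \<alpha> < b \<and> {a<..<b} \<inter> diophantine_set \<gamma> \<tau> = {\<alpha>})"
proof -
  interpret metallic_mean n \<alpha> \<tau>
    using metallic_mean_sqrt[OF assms(1,2)] assms(4) by simp
  have "\<alpha> \<in> {real n<..<\<alpha> + 1 / (real n * \<alpha> * \<alpha>)}"
    using isolated_in_diophantine_set by blast
  then show ?thesis
    using mem_diophantine_set isolated_in_diophantine_set assms(3)
    by (metis greaterThanLessThan_iff)
qed

end
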